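(* In the poset $\textsf{Star}(n)$: the identity permutation $(1)(2)\cdots(n)$ is the unique maximal element; the minimal elements are exactly the $n$-cycles, so there are $(n-1)!$ of them; and $\textsf{Star}(n)$ is graded, every maximal chain having exactly $n$ elements.
   Context: $\mathfrak{S}_n$ is the symmetric group on $[n]$, products taken right to left; cycles include fixed points. For a pivot $k\in[n]$, a star factorization of $\pi$ is $\pi=g_1\cdots g_r$ with each $g_i$ a transposition $(k\ i)$, $i\neq k$; it is transitive if all $(k\ i)$, $i\in[n]\setminus\{k\}$, occur; $\star_k(\pi)$ is the set of transitive star factorizations of $\pi$ of minimum length $n+m-2$ ($m$ = number of cycles of $\pi$). $\sigma\preceq_k\pi$ means some $\gamma\in\star_k(\sigma)$ is a not necessarily contiguous subword of some $\delta\in\star_k(\pi)$. This relation does not depend on $k$; it is denoted $\preceq$, and $\textsf{Star}(n)$ is the resulting poset on $\mathfrak{S}_n$. *)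

theory Defs
  imports "HOL-Combinatorics.Permutations" "HOL-Combinatorics.Transposition" "HOL-Library.Sublist"
begin

text \<open>A star factorization with pivot k is encoded by the word of indices [i1,...,ir],
  standing for the product (k i1)(k i2)...(k ir), composed right to left
  (the rightmost transposition is applied first).\<close>

definition star_prod :: "nat \<Rightarrow> nat list \<Rightarrow> (nat \<Rightarrow> nat)" where
  "star_prod k w = foldr (\<lambda>i acc. transpose k i \<circ> acc) w id"

definition cycle_of :: "(nat \<Rightarrow> nat) \<Rightarrow> nat \<Rightarrow> nat set" where
  "cycle_of p x = {(p ^^ j) x | j. True}"

definition num_cycles :: "nat \<Rightarrow> (nat \<Rightarrow> nat) \<Rightarrow> nat" where
  "num_cycles n p = card (cycle_of p ` {1..n})"

text \<open>Transitive star factorizations of pi (pivot k) of minimum length n + m - 2.\<close>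
definition star_facts :: "nat \<Rightarrow> nat \<Rightarrow> (nat \<Rightarrow> nat) \<Rightarrow> nat list set" where
  "star_facts n k p = {w. set w \<subseteq> {1..n} - {k} \<and> set w = {1..n} - {k}
      \<and> star_prod k w = p \<and> length w = n + num_cycles n p - 2}"

definition star_le :: "nat \<Rightarrow> nat \<Rightarrow> (nat \<Rightarrow> nat) \<Rightarrow> (nat \<Rightarrow> nat) \<Rightarrow> bool" where
  "star_le n k s p = (\<exists>g\<in>star_facts n k s. \<exists>d\<in>star_facts n k p. subseq g d)"

definition sym_group :: "nat \<Rightarrow> (nat \<Rightarrow> nat) set" where
  "sym_group n = {p. p permutes {1..n}}"

definition is_maximal :: "nat \<Rightarrow> nat \<Rightarrow> (nat \<Rightarrow> nat) \<Rightarrow> bool" where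
  "is_maximal n k x = (x \<in> sym_group n \<and> (\<forall>y\<in>sym_group n. star_le n k x y \<longrightarrow> y = x))"

definition is_minimal :: "nat \<Rightarrow> nat \<Rightarrow> (nat \<Rightarrow> nat) \<Rightarrow> bool" where
  "is_minimal n k x = (x \<in> sym_group n \<and> (\<forall>y\<in>sym_group n. star_le n k y x \<longrightarrow> y = x))"

definition is_full_cycle :: "nat \<Rightarrow> (nat \<Rightarrow> nat) \<Rightarrow> bool" where
  "is_full_cycle n p = (p permutes {1..n} \<and> num_cycles n p = 1)"

definition is_chain :: "nat \<Rightarrow> nat \<Rightarrow> (nat \<Rightarrow> nat) set \<Rightarrow> bool" where
  "is_chain n k C = (C \<subseteq> sym_group n \<and> (\<forall>x\<in>C. \<forall>y\<in>C. star_le n k x y \<or> star_le n k y x))"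

definition is_maximal_chain :: "nat \<Rightarrow> nat \<Rightarrow> (nat \<Rightarrow> nat) set \<Rightarrow> bool" where
  "is_maximal_chain n k C = (is_chain n k C \<and> (\<forall>D. is_chain n k D \<and> C \<subseteq> D \<longrightarrow> D = C))"

end

theory Submission
  imports Defs "HOL-Combinatorics.Orbits" "HOL-Combinatorics.Cycles"
    "HOL-Combinatorics.Multiset_Permutations"
begin

text \<open>Everything is graded by the cycle count \<open>m\<close>. Composing with a transposition changes
  \<open>m\<close> by at most one, and a transposition that splits a cycle can be inserted as one extra letter
  into any minimal star factorization (conjugate it through a prefix that moves the pivot).
  Conversely a subword of a star factorization differs from it by one transposition per deleted
  letter, so \<open>\<sigma> \<preceq> \<pi>\<close> forces \<open>m(\<sigma>) \<le> m(\<pi>)\<close>, with equality only if the words coincide, and every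
  relation \<open>\<sigma> \<preceq> \<pi>\<close> refines through all intermediate ranks. The identity (\<open>m = n\<close>) lies above
  everything, the minimal elements are the permutations with \<open>m = 1\<close>, which are exactly the
  star products of the \<open>(n - 1)!\<close> orderings of \<open>[n] - {k}\<close>, and a maximal chain contains
  exactly one permutation of each rank \<open>1, \<dots>, n\<close>.\<close>

lemma star_prod_Nil [simp]: "star_prod k [] = id"
  by (simp add: star_prod_def)

lemma star_prod_Cons [simp]: "star_prod k (i # w) = transpose k i \<circ> star_prod k w"
  by (simp add: star_prod_def)

lemma star_prod_append: "star_prod k (u @ v) = star_prod k u \<circ> star_prod k v"
  by (induction u) auto

lemma star_prod_permutes: "k \<in> S \<Longrightarrow> set w \<subseteq> S \<Longrightarrow> star_prod k w permutes S"
  by (induction w) (auto intro: permutes_compose permutes_swap_id)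

lemma star_prod_fixes: "z \<notin> set w \<Longrightarrow> z \<noteq> k \<Longrightarrow> star_prod k w z = z"
  by (induction w) auto

section \<open>Orbit counts under a transposition\<close>

definition orbit_count :: "'a set \<Rightarrow> ('a \<Rightarrow> 'a) \<Rightarrow> nat" where
  "orbit_count S p = card (orbit p ` S)"

definition orbits_touching :: "('a \<Rightarrow> 'a) \<Rightarrow> 'a set \<Rightarrow> 'a set \<Rightarrow> 'a set set" where
  "orbits_touching p S B = {Q \<in> orbit p ` S. Q \<inter> B \<noteq> {}}"

lemma orbit_eq_of_mem: "permutation p \<Longrightarrow> y \<in> orbit p x \<Longrightarrow> orbit p y = orbit p x"
  by (rule orbit_cyclic_eq3[OF cyclic_on_orbit'])

lemma orbit_count_eq_sum:
  assumes "finite S"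
  shows "orbit_count S p
    = card (orbit p ` S - orbits_touching p S B) + card (orbits_touching p S B)"
  using assms card_Diff_subset[of "orbits_touching p S B" "orbit p ` S"]
    card_mono[of "orbit p ` S" "orbits_touching p S B"]
  unfolding orbit_count_def orbits_touching_def by fastforce

lemma orbit_transpose_comp:
  assumes "permutation x" "a \<notin> orbit x z" "b \<notin> orbit x z"
  shows "orbit (transpose a b \<circ> x) z = orbit x z"
proof (rule orbit_cong)
  show "z \<in> orbit x z" using assms(1) by (rule permutation_self_in_orbit)
  fix s assume "s \<in> orbit x z"
  then have "x s \<in> orbit x z" by (rule orbit.step)
  then have "x s \<noteq> a" "x s \<noteq> b" using assms(2,3) by auto
  then show "(transpose a b \<circ> x) s = x s" by simp
qed

lemma orbits_avoiding_transpose_comp_subset: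
  assumes "permutation x"
  shows "orbit x ` S - orbits_touching x S {a, b}
    \<subseteq> orbit (transpose a b \<circ> x) ` S - orbits_touching (transpose a b \<circ> x) S {a, b}"
proof
  fix Q assume "Q \<in> orbit x ` S - orbits_touching x S {a, b}"
  then obtain z where "z \<in> S" "Q = orbit x z" "a \<notin> Q" "b \<notin> Q"
    unfolding orbits_touching_def by blast
  then have "Q \<in> orbit (transpose a b \<circ> x) ` S"
    using orbit_transpose_comp[OF assms] by (metis image_eqI)
  with \<open>a \<notin> Q\<close> \<open>b \<notin> Q\<close> show "Q \<in> orbit (transpose a b \<circ> x) ` S
      - orbits_touching (transpose a b \<circ> x) S {a, b}"
    unfolding orbits_touching_def by auto
qed

lemma orbits_avoiding_transpose_comp:
  assumes "permutation x"
  shows "orbit (transpose a b \<circ> x) ` S - orbits_touching (transpose a b \<circ> x) S {a, b}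
    = orbit x ` S - orbits_touching x S {a, b}"
proof
  have "permutation (transpose a b \<circ> x)"
    using assms by (simp add: permutation_compose permutation_swap_id)
  then show "orbit (transpose a b \<circ> x) ` S - orbits_touching (transpose a b \<circ> x) S {a, b}
      \<subseteq> orbit x ` S - orbits_touching x S {a, b}"
    using orbits_avoiding_transpose_comp_subset[of "transpose a b \<circ> x" S a b]
    by (simp flip: comp_assoc)
qed (rule orbits_avoiding_transpose_comp_subset[OF assms])

lemma orbits_touching_subset:
  assumes "permutation x"
  shows "orbits_touching x S {a, b} \<subseteq> {orbit x a, orbit x b}"
  using orbit_eq_of_mem[OF assms] unfolding orbits_touching_def by blast

lemma orbit_mem_orbits_touching:
  assumes "permutation x" "a \<in> S" "a \<in> B"
  shows "orbit x a \<in> orbits_touching x S B"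
  using assms permutation_self_in_orbit[OF assms(1), of a] unfolding orbits_touching_def by blast

lemma card_orbits_touching_le_2:
  assumes "permutation x"
  shows "card (orbits_touching x S {a, b}) \<le> 2"
proof -
  have "card (orbits_touching x S {a, b}) \<le> card {orbit x a, orbit x b}"
    using card_mono[OF _ orbits_touching_subset[OF assms]] by simp
  also have "\<dots> \<le> 2" by (cases "orbit x a = orbit x b") auto
  finally show ?thesis .
qed

lemma card_orbits_touching_ge_1:
  assumes "finite S" "permutation x" "a \<in> S"
  shows "1 \<le> card (orbits_touching x S {a, b})"
proof -
  have "finite (orbits_touching x S {a, b})"
    using assms(1) unfolding orbits_touching_def by simp
  then show ?thesis
    using orbit_mem_orbits_touching[OF assms(2,3), of "{a, b}"]
    by (metis One_nat_def Suc_leI card_gt_0_iff empty_iff insertI1)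
qed

text \<open>Orbits avoiding \<open>a\<close> and \<open>b\<close> are unchanged, and on either side one or two orbits
  meet \<open>{a, b}\<close>.\<close>
lemma orbit_count_transpose_comp_le:
  assumes "finite S" "x permutes S" "a \<in> S"
  shows "orbit_count S (transpose a b \<circ> x) \<le> orbit_count S x + 1"
proof -
  have px: "permutation x" using assms(1,2) by (auto simp: permutation_permutes)
  then have py: "permutation (transpose a b \<circ> x)"
    by (intro permutation_compose permutation_swap_id)
  show ?thesis
    using orbit_count_eq_sum[OF assms(1), of x "{a, b}"]
      orbit_count_eq_sum[OF assms(1), of "transpose a b \<circ> x" "{a, b}"]
      orbits_avoiding_transpose_comp[OF px, of a b S]
      card_orbits_touching_le_2[OF py, of S a b]
      card_orbits_touching_ge_1[OF assms(1) px assms(3), of b]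
    by simp
qed

text \<open>\<open>transpose a b\<close> redirects the predecessor of \<open>a\<close> on its orbit to \<open>b\<close>.\<close>
lemma mem_orbit_transpose_comp:
  assumes "permutation x" "b \<notin> orbit x a"
  shows "b \<in> orbit (transpose a b \<circ> x) a"
proof -
  let ?y = "transpose a b \<circ> x"
  have on_orbit: "s = a \<or> s \<in> orbit ?y a" if "s \<in> orbit x a" for s
    using that
  proof induction
    case base
    have "x a \<noteq> b" using assms(2) orbit.base[of x a] by auto
    then have "x a = a \<or> ?y a = x a" by (cases "x a = a") auto
    then show ?case by (metis orbit.base)
  next
    case (step s)
    then have "x s \<noteq> b" using assms(2) by (auto dest: orbit.step)
    then have "x s = a \<or> ?y s = x s" by (cases "x s = a") auto
    then show ?case using step.IH by (metis orbit.intros)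
  qed
  have a_in: "a \<in> orbit x a" using assms(1) by (rule permutation_self_in_orbit)
  then obtain p where p: "p \<in> orbit x a" "x p = a"
    by cases (use a_in in auto)
  then have yp: "?y p = b" by simp
  from on_orbit[OF p(1)] show ?thesis
  proof
    assume "p = a"
    then show ?thesis using yp orbit.base[of ?y a] by simp
  next
    assume "p \<in> orbit ?y a"
    then show ?thesis using yp orbit.step[of p ?y a] by simp
  qed
qed

lemma orbit_count_transpose_comp_merge:
  assumes "finite S" "x permutes S" "a \<in> S" "b \<in> S" "b \<notin> orbit x a"
  shows "orbit_count S (transpose a b \<circ> x) + 1 = orbit_count S x"
proof -
  let ?y = "transpose a b \<circ> x"
  have px: "permutation x" using assms(1,2) by (auto simp: permutation_permutes)
  then have py: "permutation ?y" by (intro permutation_compose permutation_swap_id)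
  have "orbit ?y b = orbit ?y a"
    using orbit_eq_of_mem[OF py mem_orbit_transpose_comp[OF px assms(5)]] .
  moreover have "card (orbits_touching ?y S {a, b}) \<le> card {orbit ?y a, orbit ?y b}"
    using card_mono[OF _ orbits_touching_subset[OF py]] by simp
  ultimately have "card (orbits_touching ?y S {a, b}) \<le> 1"
    by simp
  moreover have "2 \<le> card (orbits_touching x S {a, b})"
  proof -
    have "b \<in> orbit x b" using px by (rule permutation_self_in_orbit)
    then have "orbit x a \<noteq> orbit x b" using assms(5) by blast
    then have "card {orbit x a, orbit x b} = 2" by simp
    moreover have "{orbit x a, orbit x b} \<subseteq> orbits_touching x S {a, b}"
      using orbit_mem_orbits_touching[OF px assms(3)] orbit_mem_orbits_touching[OF px assms(4)]
      by simp
    moreover have "finite (orbits_touching x S {a, b})"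
      using assms(1) unfolding orbits_touching_def by simp
    ultimately show ?thesis by (metis card_mono)
  qed
  moreover have "card (orbits_touching x S {a, b}) \<le> 2"
    using card_orbits_touching_le_2[OF px] .
  moreover have "1 \<le> card (orbits_touching ?y S {a, b})"
    using card_orbits_touching_ge_1[OF assms(1) py assms(3)] .
  ultimately show ?thesis
    using orbit_count_eq_sum[OF assms(1), of x "{a, b}"]
      orbit_count_eq_sum[OF assms(1), of ?y "{a, b}"]
      orbits_avoiding_transpose_comp[OF px, of a b S]
    by simp
qed

lemma cycle_of_eq_orbit: "permutation p \<Longrightarrow> cycle_of p x = orbit p x"
  by (simp add: cycle_of_def orbit_altdef_permutation)

lemma num_cycles_eq_orbit_count:
  assumes "p permutes {1..n}"
  shows "num_cycles n p = orbit_count {1..n} p"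
proof -
  have "cycle_of p = orbit p"
    using permutes_imp_permutation[OF _ assms] by (simp add: fun_eq_iff cycle_of_eq_orbit)
  then show ?thesis by (simp add: num_cycles_def orbit_count_def)
qed

lemma num_cycles_transpose_comp_le:
  assumes "x permutes {1..n}" "a \<in> {1..n}" "b \<in> {1..n}"
  shows "num_cycles n (transpose a b \<circ> x) \<le> num_cycles n x + 1"
proof -
  have "transpose a b \<circ> x permutes {1..n}"
    using assms by (simp add: permutes_compose permutes_swap_id)
  then show ?thesis
    using orbit_count_transpose_comp_le[OF _ assms(1,2)] num_cycles_eq_orbit_count assms(1) by simp
qed

lemma num_cycles_transpose_comp_merge:
  assumes "x permutes {1..n}" "a \<in> {1..n}" "b \<in> {1..n}" "b \<notin> cycle_of x a"
  shows "num_cycles n (transpose a b \<circ> x) + 1 = num_cycles n x"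
proof -
  have "transpose a b \<circ> x permutes {1..n}"
    using assms by (simp add: permutes_compose permutes_swap_id)
  moreover have "b \<notin> orbit x a"
    using assms(4) permutes_imp_permutation[OF _ assms(1)] by (simp add: cycle_of_eq_orbit)
  ultimately show ?thesis
    using orbit_count_transpose_comp_merge[OF _ assms(1-3)] num_cycles_eq_orbit_count assms(1)
    by simp
qed

lemma num_cycles_ge_1: "1 \<le> n \<Longrightarrow> 1 \<le> num_cycles n p"
  unfolding num_cycles_def by (simp add: Suc_leI card_gt_0_iff)

lemma num_cycles_le: "num_cycles n p \<le> n"
  unfolding num_cycles_def using card_image_le[of "{1..n}" "cycle_of p"] by simp

lemma num_cycles_id: "num_cycles n id = n"
proof -
  have "cycle_of id = (\<lambda>z. {z})" by (simp add: fun_eq_iff cycle_of_def)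
  then show ?thesis by (simp add: num_cycles_def card_image)
qed

section \<open>Full cycles as star products of distinct letters\<close>

text \<open>A product of star transpositions with distinct letters merges a new fixed point into
  the cycle of the pivot at every step.\<close>
lemma num_cycles_star_prod_distinct:
  assumes "k \<in> {1..n}" "set w \<subseteq> {1..n} - {k}" "distinct w"
  shows "num_cycles n (star_prod k w) + length w = n"
  using assms(2,3)
proof (induction w)
  case Nil
  then show ?case using num_cycles_id[of n] by (simp add: id_def)
next
  case (Cons a w)
  let ?x = "star_prod k w"
  have x: "?x permutes {1..n}" using Cons.prems assms(1) by (intro star_prod_permutes) auto
  have "?x a = a" using Cons.prems by (intro star_prod_fixes) auto
  then have "(?x ^^ j) a = a" for j by (induction j) auto
  then have "cycle_of ?x a = {a}" by (auto simp: cycle_of_def)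
  then have "num_cycles n (transpose a k \<circ> ?x) + 1 = num_cycles n ?x"
    using Cons.prems assms(1) by (intro num_cycles_transpose_comp_merge[OF x]) auto
  moreover have "star_prod k (a # w) = transpose a k \<circ> ?x" by (simp add: transpose_commute)
  ultimately have "num_cycles n (star_prod k (a # w)) + 1 = num_cycles n ?x" by simp
  moreover have "num_cycles n ?x + length w = n" using Cons by simp
  ultimately show ?case by (simp only: length_Cons)
qed

lemma transpose_comp_transpose_pivot:
  "distinct [k, c, a] \<Longrightarrow> transpose k c \<circ> transpose c a = transpose k a \<circ> transpose k c"
  by (auto simp: fun_eq_iff transpose_def)

lemma cycle_of_list_snoc:
  assumes "distinct (k # cs @ [a])"
  shows "cycle_of_list (k # cs @ [a]) = transpose k a \<circ> cycle_of_list (k # cs)"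
  using assms
proof (induction cs arbitrary: k)
  case Nil
  then show ?case by simp
next
  case (Cons c cs)
  have "cycle_of_list (k # (c # cs) @ [a]) = transpose k c \<circ> cycle_of_list (c # cs @ [a])"
    by simp
  also have "\<dots> = transpose k c \<circ> transpose c a \<circ> cycle_of_list (c # cs)"
    using Cons.IH[of c] Cons.prems by (simp add: fun_eq_iff)
  also have "\<dots> = transpose k a \<circ> cycle_of_list (k # c # cs)"
    using Cons.prems by (simp add: transpose_comp_transpose_pivot comp_assoc)
  finally show ?case .
qed

lemma star_prod_distinct_eq_cycle_of_list:
  "distinct w \<Longrightarrow> k \<notin> set w \<Longrightarrow> star_prod k w = cycle_of_list (k # rev w)"
  by (induction w) (simp_all add: cycle_of_list_snoc)

lemma cycle_of_list_orbit_list: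
  assumes "distinct cs" "cs \<noteq> []"
  shows "cs = map (\<lambda>i. (cycle_of_list cs ^^ i) (hd cs)) [0..<length cs]"
proof (rule nth_equalityI)
  fix i assume "i < length cs"
  then have "(cycle_of_list cs ^^ i) (hd cs) = rotate i cs ! 0"
    using cyclic_rotation[OF assms(1), of i] assms(2) by (metis hd_conv_nth length_greater_0_conv nth_map)
  then show "cs ! i = map (\<lambda>i. (cycle_of_list cs ^^ i) (hd cs)) [0..<length cs] ! i"
    using \<open>i < length cs\<close> nth_rotate[of 0 cs i] assms(2) by simp
qed simp

lemma inj_on_star_prod_permutations_of_set:
  assumes "k \<notin> A"
  shows "inj_on (star_prod k) (permutations_of_set A)"
proof (rule inj_onI)
  fix w v assume w: "w \<in> permutations_of_set A" and v: "v \<in> permutations_of_set A"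
    and eq: "star_prod k w = star_prod k v"
  have "distinct (k # rev w)" "distinct (k # rev v)"
    using w v assms by (auto simp: permutations_of_set_def)
  moreover have "length w = length v"
    using w v by (simp add: permutations_of_set_def length_finite_permutations_of_set)
  moreover have "cycle_of_list (k # rev w) = cycle_of_list (k # rev v)"
    using eq w v assms by (simp add: star_prod_distinct_eq_cycle_of_list permutations_of_set_def)
  ultimately have "k # rev w = k # rev v"
    using cycle_of_list_orbit_list[of "k # rev w"] cycle_of_list_orbit_list[of "k # rev v"]
    by (metis length_Cons length_rev list.sel(1) list.simps(3))
  then show "w = v" by simp
qed

lemma cycle_of_full_cycle:
  assumes "is_full_cycle n c" "k \<in> {1..n}"
  shows "cycle_of c k = {1..n}"
proof
  have c: "c permutes {1..n}" using assms(1) by (simp add: is_full_cycle_def)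
  show "cycle_of c k \<subseteq> {1..n}"
    using permutes_in_image[OF permutes_funpow[OF c]] assms(2) by (auto simp: cycle_of_def)
  have "card (cycle_of c ` {1..n}) = 1"
    using assms(1) by (simp add: is_full_cycle_def num_cycles_def)
  then have "cycle_of c ` {1..n} = {cycle_of c k}"
    using assms(2) by (metis card_1_singletonE image_eqI singletonD)
  moreover have "z \<in> cycle_of c z" for z
    unfolding cycle_of_def by (metis (mono_tags) funpow_0 mem_Collect_eq)
  ultimately show "{1..n} \<subseteq> cycle_of c k" by blast
qed

lemma full_cycle_eq_star_prod:
  assumes "is_full_cycle n c" "k \<in> {1..n}"
  obtains w where "w \<in> permutations_of_set ({1..n} - {k})" "star_prod k w = c"
proof -
  have c: "c permutes {1..n}" using assms(1) by (simp add: is_full_cycle_def)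
  then have pc: "permutation c" by (simp add: permutes_imp_permutation[OF _ c])
  obtain ws where cs: "support c k = k # ws"
    using least_power_of_permutation(2)[OF pc, of k] by (simp add: upt_conv_Cons)
  have "distinct (k # ws)" using cycle_of_permutation[OF pc, of k] cs by simp
  moreover have set_cs: "set (k # ws) = {1..n}"
    using support_set[OF pc, of k] cycle_of_full_cycle[OF assms] cs
    by (simp add: cycle_of_def full_SetCompr_eq)
  ultimately have "rev ws \<in> permutations_of_set ({1..n} - {k})"
    by (intro permutations_of_setI) auto
  moreover have "c = cycle_of_list (k # ws)"
  proof
    fix z show "c z = cycle_of_list (k # ws) z"
    proof (cases "z \<in> set (k # ws)")
      case True
      then show ?thesis using cycle_restrict[OF pc, of z k] unfolding cs by blast
    next
      case False
      then show ?thesis using id_outside_supp[of z "k # ws"] permutes_not_in[OF c] set_cs by auto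
    qed
  qed
  then have "star_prod k (rev ws) = c"
    using \<open>distinct (k # ws)\<close> by (simp add: star_prod_distinct_eq_cycle_of_list)
  ultimately show ?thesis by (rule that)
qed

lemma card_full_cycles:
  assumes "k \<in> {1..n}"
  shows "card {c. is_full_cycle n c} = fact (n - 1)"
proof -
  let ?W = "permutations_of_set ({1..n} - {k})"
  have "{c. is_full_cycle n c} = star_prod k ` ?W"
  proof
    show "{c. is_full_cycle n c} \<subseteq> star_prod k ` ?W"
    proof
      fix c assume "c \<in> {c. is_full_cycle n c}"
      then obtain w where "w \<in> ?W" "star_prod k w = c"
        using full_cycle_eq_star_prod[OF _ assms] by auto
      then show "c \<in> star_prod k ` ?W" by blast
    qed
    show "star_prod k ` ?W \<subseteq> {c. is_full_cycle n c}"
    proof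
      fix p assume "p \<in> star_prod k ` ?W"
      then obtain w where w: "w \<in> ?W" "p = star_prod k w" by blast
      then have set_w: "set w = {1..n} - {k}" and "distinct w"
        by (auto simp: permutations_of_set_def)
      then have "length w = n - 1" using assms distinct_card[of w] by simp
      moreover have "num_cycles n p + length w = n"
        using num_cycles_star_prod_distinct[OF assms _ \<open>distinct w\<close>] set_w w(2) by simp
      ultimately have "num_cycles n p = 1" using assms by auto
      moreover have "p permutes {1..n}"
        using star_prod_permutes[of k "{1..n}" w] set_w w(2) assms by auto
      ultimately show "p \<in> {c. is_full_cycle n c}" by (simp add: is_full_cycle_def)
    qed
  qed
  moreover have "card (star_prod k ` ?W) = card ?W"
    by (rule card_image[OF inj_on_star_prod_permutations_of_set]) simp
  ultimately show ?thesis using assms by simp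
qed

lemma star_factsI:
  "set w = {1..n} - {k} \<Longrightarrow> star_prod k w = p \<Longrightarrow> length w = n + num_cycles n p - 2
    \<Longrightarrow> w \<in> star_facts n k p"
  by (simp add: star_facts_def)

lemma star_factsD:
  assumes "w \<in> star_facts n k p"
  shows "set w = {1..n} - {k}" "star_prod k w = p" "length w = n + num_cycles n p - 2"
  using assms by (simp_all add: star_facts_def)

lemma star_facts_permutes: "k \<in> {1..n} \<Longrightarrow> w \<in> star_facts n k p \<Longrightarrow> p permutes {1..n}"
  using star_prod_permutes[of k "{1..n}" w] star_factsD[of w n k p] by auto

lemma star_facts_full_cycle_nonempty:
  assumes "is_full_cycle n c" "k \<in> {1..n}"
  shows "star_facts n k c \<noteq> {}"
proof -
  obtain w where w: "w \<in> permutations_of_set ({1..n} - {k})" "star_prod k w = c"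
    using full_cycle_eq_star_prod[OF assms] .
  then have "set w = {1..n} - {k}" "distinct w" by (auto simp: permutations_of_set_def)
  then have "length w = n + num_cycles n c - 2"
    using assms distinct_card[of w] by (simp add: is_full_cycle_def)
  then show ?thesis using star_factsI[OF \<open>set w = _\<close> w(2)] by blast
qed

lemma star_prod_prefix_moving_pivot:
  assumes "c = k \<or> c \<in> set d"
  obtains u v where "d = u @ v" "star_prod k u k = c"
proof (cases "c = k")
  case True
  then show ?thesis using that[of "[]" d] by simp
next
  case False
  then obtain u v where d: "d = u @ c # v" and "c \<notin> set u"
    using assms by (metis split_list_first)
  then have "star_prod k (u @ [c]) k = c"
    using star_prod_fixes[of c u k] False by (simp add: star_prod_append)
  then show ?thesis using that[of "u @ [c]" v] d by simp
qed

text \<open>Multiplying on the left by a transposition that splits a cycle costs one letter: write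
  \<open>d = u @ v\<close> with \<open>star_prod k u\<close> moving \<open>k\<close> to \<open>a\<close>; conjugating \<open>transpose a b\<close> through
  \<open>star_prod k u\<close> turns it into a star transposition \<open>transpose k c\<close>, which is inserted
  between \<open>u\<close> and \<open>v\<close>.\<close>
lemma star_facts_insert:
  assumes k: "k \<in> {1..n}" and d: "d \<in> star_facts n k x"
    and ab: "a \<in> {1..n}" "b \<in> {1..n}" "a \<noteq> b"
    and split: "num_cycles n (transpose a b \<circ> x) = num_cycles n x + 1"
  shows "\<exists>e \<in> star_facts n k (transpose a b \<circ> x). subseq d e"
proof -
  have set_d: "set d = {1..n} - {k}" using star_factsD(1)[OF d] .
  have "a = k \<or> a \<in> set d" using set_d ab(1) by auto
  then obtain u v where uv: "d = u @ v" and Uk: "star_prod k u k = a"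
    by (rule star_prod_prefix_moving_pivot)
  let ?U = "star_prod k u"
  have U: "?U permutes {1..n}" using star_prod_permutes[OF k, of u] set_d uv by auto
  then have bij_U: "bij ?U" by (rule permutes_bij)
  define c where "c = inv ?U b"
  have Uc: "?U c = b" unfolding c_def by (simp add: bij_is_surj[OF bij_U] surj_f_inv_f)
  have "c \<in> {1..n}" unfolding c_def using permutes_in_image[OF permutes_inv[OF U]] ab(2) by simp
  moreover have "c \<noteq> k" using Uc Uk ab(3) by metis
  ultimately have c: "c \<in> {1..n}" "c \<noteq> k" .
  have "inv ?U a = k" using Uk inv_f_f[OF bij_is_inj[OF bij_U], of k] by simp
  then have conj: "?U \<circ> transpose k c = transpose a b \<circ> ?U"
    using transpose_comp_eq[OF bij_U, of a b] unfolding c_def by simp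
  define e where "e = u @ c # v"
  have "star_prod k e = ?U \<circ> transpose k c \<circ> star_prod k v"
    unfolding e_def by (simp add: star_prod_append comp_assoc)
  also have "\<dots> = transpose a b \<circ> x"
    using conj star_factsD(2)[OF d] uv by (simp add: star_prod_append comp_assoc)
  finally have "star_prod k e = transpose a b \<circ> x" .
  moreover have "set e = {1..n} - {k}"
  proof -
    have "set e = insert c (set d)" unfolding e_def uv by auto
    then show ?thesis using set_d c by auto
  qed
  moreover have "length e = n + num_cycles n (transpose a b \<circ> x) - 2"
  proof -
    have "length e = length d + 1" unfolding e_def uv by simp
    moreover have "1 \<le> num_cycles n x" using k num_cycles_ge_1 by simp
    ultimately show ?thesis using star_factsD(3)[OF d] split k by simp arith
  qed
  ultimately have "e \<in> star_facts n k (transpose a b \<circ> x)" by (intro star_factsI)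
  moreover have "subseq d e" unfolding uv e_def by (simp add: subseq_append' subseq_Cons')
  ultimately show ?thesis by blast
qed

section \<open>Subwords and products of transpositions\<close>

definition transp_prod :: "('a \<times> 'a) list \<Rightarrow> 'a \<Rightarrow> 'a" where
  "transp_prod ts = foldr (\<lambda>(a, b) f. transpose a b \<circ> f) ts id"

lemma transp_prod_Nil [simp]: "transp_prod [] = id"
  by (simp add: transp_prod_def)

lemma transp_prod_Cons [simp]: "transp_prod ((a, b) # ts) = transpose a b \<circ> transp_prod ts"
  by (simp add: transp_prod_def)

lemma transp_prod_map_conj:
  assumes "bij g"
  shows "transp_prod (map (map_prod g g) ts) (g z) = g (transp_prod ts z)"
  by (induction ts arbitrary: z)
    (auto simp: transpose_apply_commute[OF assms] inv_f_f[OF bij_is_inj[OF assms]])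

lemma transp_prod_Cons_comp: "transp_prod ((a, b) # ts) \<circ> x = transpose a b \<circ> (transp_prod ts \<circ> x)"
  by (simp add: fun_eq_iff)

lemma transp_prod_comp_permutes:
  assumes "x permutes S" "set ts \<subseteq> S \<times> S"
  shows "transp_prod ts \<circ> x permutes S"
  using assms(2)
proof (induction ts)
  case Nil
  then show ?case using assms(1) by simp
next
  case (Cons t ts)
  obtain a b where t: "t = (a, b)" by (cases t)
  have "set ts \<subseteq> S \<times> S" using Cons.prems by simp
  then have "transp_prod ts \<circ> x permutes S" by (rule Cons.IH)
  moreover have "transpose a b permutes S" using Cons.prems t by (intro permutes_swap_id) auto
  ultimately show ?case unfolding t transp_prod_Cons_comp by (rule permutes_compose)
qed

text \<open>A word obtained from a subword by inserting letters differs from it by a product of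
  one transposition per inserted letter: an inserted letter \<open>y\<close> contributes \<open>transpose k y\<close>,
  and every letter kept afterwards conjugates the transpositions collected so far.\<close>
lemma subseq_star_prod_eq_transp_prod:
  assumes "subseq xs ys" "set ys \<subseteq> S" "k \<in> S"
  shows "\<exists>ts. length ts = length ys - length xs \<and> set ts \<subseteq> S \<times> S
    \<and> star_prod k ys = transp_prod ts \<circ> star_prod k xs"
  using assms
proof (induction rule: list_emb.induct)
  case (list_emb_Nil ys)
  have "star_prod k ys = transp_prod (map (Pair k) ys)" by (induction ys) auto
  then show ?case using list_emb_Nil by (intro exI[of _ "map (Pair k) ys"]) auto
next
  case (list_emb_Cons xs ys y)
  then have "set ys \<subseteq> S" "y \<in> S" by simp_all
  then obtain ts where ts: "length ts = length ys - length xs" "set ts \<subseteq> S \<times> S"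
      "star_prod k ys = transp_prod ts \<circ> star_prod k xs"
    using list_emb_Cons.IH list_emb_Cons.prems(2) by blast
  have "length xs \<le> length ys" using list_emb_Cons(1) by (rule list_emb_length)
  moreover have "star_prod k (y # ys) = transp_prod ((k, y) # ts) \<circ> star_prod k xs"
    using ts(3) by (simp add: fun_eq_iff)
  ultimately show ?case
    using ts(1,2) \<open>y \<in> S\<close> list_emb_Cons.prems(2) by (intro exI[of _ "(k, y) # ts"]) simp
next
  case (list_emb_Cons2 x y xs ys)
  then have "set ys \<subseteq> S" "y \<in> S" by simp_all
  then obtain ts where ts: "length ts = length ys - length xs" "set ts \<subseteq> S \<times> S"
      "star_prod k ys = transp_prod ts \<circ> star_prod k xs"
    using list_emb_Cons2.IH list_emb_Cons2.prems(2) by blast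
  let ?g = "transpose k y"
  let ?ts = "map (map_prod ?g ?g) ts"
  have "star_prod k (y # ys) = transp_prod ?ts \<circ> star_prod k (x # xs)"
    using ts(3) list_emb_Cons2.hyps(1) by (simp add: fun_eq_iff transp_prod_map_conj)
  moreover have "set ?ts \<subseteq> S \<times> S"
    using ts(2) \<open>y \<in> S\<close> list_emb_Cons2.prems(2) by (auto simp: transpose_def)
  ultimately show ?case using ts(1) by (intro exI[of _ ?ts]) simp
qed

lemma num_cycles_transp_prod_comp_le:
  assumes "x permutes {1..n}" "set ts \<subseteq> {1..n} \<times> {1..n}"
  shows "num_cycles n (transp_prod ts \<circ> x) \<le> num_cycles n x + length ts"
  using assms(2)
proof (induction ts)
  case Nil
  then show ?case by simp
next
  case (Cons t ts)
  obtain a b where t: "t = (a, b)" by (cases t)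
  have ts: "set ts \<subseteq> {1..n} \<times> {1..n}" using Cons.prems by simp
  have "num_cycles n (transpose a b \<circ> (transp_prod ts \<circ> x))
      \<le> num_cycles n (transp_prod ts \<circ> x) + 1"
    using Cons.prems t transp_prod_comp_permutes[OF assms(1) ts]
    by (intro num_cycles_transpose_comp_le) auto
  moreover have "num_cycles n (transp_prod ts \<circ> x) \<le> num_cycles n x + length ts"
    using Cons.IH[OF ts] .
  ultimately show ?case unfolding t transp_prod_Cons_comp length_Cons by linarith
qed

text \<open>The cycle count forces every transposition of \<open>ts\<close> to split a cycle, so
  \<open>star_facts_insert\<close> applies at each step.\<close>
lemma star_facts_transp_prod_comp:
  assumes k: "k \<in> {1..n}" and d: "d \<in> star_facts n k x"
    and ts: "set ts \<subseteq> {1..n} \<times> {1..n}"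
    and split: "num_cycles n (transp_prod ts \<circ> x) = num_cycles n x + length ts"
  shows "\<exists>e \<in> star_facts n k (transp_prod ts \<circ> x). subseq d e"
  using ts split
proof (induction ts)
  case Nil
  then show ?case using d by auto
next
  case (Cons t ts)
  obtain a b where t: "t = (a, b)" by (cases t)
  have ab: "a \<in> {1..n}" "b \<in> {1..n}" and ts: "set ts \<subseteq> {1..n} \<times> {1..n}"
    using Cons.prems(1) t by auto
  let ?y = "transp_prod ts \<circ> x"
  have x: "x permutes {1..n}" using star_facts_permutes[OF k d] .
  then have y: "?y permutes {1..n}" by (rule transp_prod_comp_permutes[OF _ ts])
  have eq: "transp_prod (t # ts) \<circ> x = transpose a b \<circ> ?y" unfolding t by (rule transp_prod_Cons_comp)
  then have "num_cycles n (transpose a b \<circ> ?y) = num_cycles n x + length (t # ts)"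
    using Cons.prems(2) by (simp only:)
  moreover have "num_cycles n (transpose a b \<circ> ?y) \<le> num_cycles n ?y + 1"
    using num_cycles_transpose_comp_le[OF y ab] .
  moreover have "num_cycles n ?y \<le> num_cycles n x + length ts"
    using num_cycles_transp_prod_comp_le[OF x ts] .
  ultimately have split_ts: "num_cycles n ?y = num_cycles n x + length ts"
    and split_ab: "num_cycles n (transpose a b \<circ> ?y) = num_cycles n ?y + 1"
    unfolding length_Cons by linarith+
  obtain e' where e': "e' \<in> star_facts n k ?y" "subseq d e'"
    using Cons.IH[OF ts split_ts] by blast
  have "a \<noteq> b" using split_ab by auto
  then obtain e where e: "e \<in> star_facts n k (transpose a b \<circ> ?y)" "subseq e' e"
    using star_facts_insert[OF k e'(1) ab _ split_ab] by blast
  then show ?case using e'(2) subseq_order.trans eq by metis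
qed

section \<open>Grading of the order by the cycle count\<close>

lemma star_le_num_cycles_le:
  assumes "k \<in> {1..n}" "star_le n k x y"
  shows "num_cycles n x \<le> num_cycles n y"
proof -
  obtain g d where g: "g \<in> star_facts n k x" and d: "d \<in> star_facts n k y" and "subseq g d"
    using assms(2) unfolding star_le_def by blast
  then have "length g \<le> length d" by (simp add: list_emb_length)
  moreover have "1 \<le> n" "1 \<le> num_cycles n x" "1 \<le> num_cycles n y"
    using assms(1) num_cycles_ge_1 by auto
  ultimately show ?thesis using star_factsD(3)[OF g] star_factsD(3)[OF d] by arith
qed

lemma star_le_num_cycles_eq_imp_eq:
  assumes "star_le n k x y" "num_cycles n x = num_cycles n y"
  shows "x = y"
proof -
  obtain g d where g: "g \<in> star_facts n k x" and d: "d \<in> star_facts n k y" and "subseq g d"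
    using assms(1) unfolding star_le_def by blast
  moreover have "length g = length d"
    using star_factsD(3)[OF g] star_factsD(3)[OF d] assms(2) by simp
  ultimately have "g = d" using subseq_same_length by blast
  then show ?thesis using star_factsD(2)[OF g] star_factsD(2)[OF d] by simp
qed

lemma star_le_imp_eq_transp_prod_comp:
  assumes k: "k \<in> {1..n}" and "star_le n k x y"
  obtains ts where "length ts = num_cycles n y - num_cycles n x"
    "set ts \<subseteq> {1..n} \<times> {1..n}" "y = transp_prod ts \<circ> x"
proof -
  obtain g e where g: "g \<in> star_facts n k x" and e: "e \<in> star_facts n k y" and "subseq g e"
    using assms(2) unfolding star_le_def by blast
  moreover have "set e \<subseteq> {1..n}" using star_factsD(1)[OF e] by auto
  ultimately obtain ts where ts: "length ts = length e - length g" "set ts \<subseteq> {1..n} \<times> {1..n}"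
      "star_prod k e = transp_prod ts \<circ> star_prod k g"
    using subseq_star_prod_eq_transp_prod k by blast
  have "1 \<le> num_cycles n x" using k num_cycles_ge_1 by simp
  then have "length ts = num_cycles n y - num_cycles n x"
    using ts(1) star_factsD(3)[OF g] star_factsD(3)[OF e] k by simp arith
  moreover have "y = transp_prod ts \<circ> x"
    using ts(3) star_factsD(2)[OF g] star_factsD(2)[OF e] by simp
  ultimately show ?thesis using that ts(2) by blast
qed

lemma star_le_trans:
  assumes k: "k \<in> {1..n}" and "star_le n k s p" "star_le n k p q"
  shows "star_le n k s q"
proof -
  obtain g d where g: "g \<in> star_facts n k s" and d: "d \<in> star_facts n k p" and "subseq g d"
    using assms(2) unfolding star_le_def by blast
  obtain ts where ts: "length ts = num_cycles n q - num_cycles n p"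
      "set ts \<subseteq> {1..n} \<times> {1..n}" "q = transp_prod ts \<circ> p"
    using star_le_imp_eq_transp_prod_comp[OF k assms(3)] .
  have "num_cycles n (transp_prod ts \<circ> p) = num_cycles n p + length ts"
    using ts star_le_num_cycles_le[OF k assms(3)] by simp
  then obtain e where "e \<in> star_facts n k q" "subseq d e"
    using star_facts_transp_prod_comp[OF k d ts(2)] ts(3) by blast
  then show ?thesis
    unfolding star_le_def using g \<open>subseq g d\<close> subseq_order.trans by blast
qed

lemma star_le_interpolate:
  assumes k: "k \<in> {1..n}" and xy: "star_le n k x y"
    and gap: "num_cycles n x < num_cycles n y"
  obtains z where "z \<in> sym_group n" "star_le n k x z" "star_le n k z y"
    "num_cycles n z + 1 = num_cycles n y"
proof -
  obtain g where g: "g \<in> star_facts n k x"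
    using xy unfolding star_le_def by blast
  obtain ts where ts: "length ts = num_cycles n y - num_cycles n x"
      "set ts \<subseteq> {1..n} \<times> {1..n}" "y = transp_prod ts \<circ> x"
    using star_le_imp_eq_transp_prod_comp[OF k xy] .
  then obtain t ts' where t: "ts = t # ts'" using gap by (cases ts) auto
  let ?z = "transp_prod ts' \<circ> x"
  have x: "x permutes {1..n}" using star_facts_permutes[OF k g] .
  have ts': "set ts' \<subseteq> {1..n} \<times> {1..n}" and t_set: "set [t] \<subseteq> {1..n} \<times> {1..n}"
    using ts(2) t by auto
  have z: "?z permutes {1..n}" using transp_prod_comp_permutes[OF x ts'] .
  have y: "y = transp_prod [t] \<circ> ?z"
    using ts(3) t by (cases t) (simp add: comp_assoc)
  have "num_cycles n y \<le> num_cycles n ?z + 1"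
    using num_cycles_transp_prod_comp_le[OF z t_set] y by simp
  moreover have "num_cycles n ?z \<le> num_cycles n x + length ts'"
    using num_cycles_transp_prod_comp_le[OF x ts'] .
  ultimately have split_ts': "num_cycles n ?z = num_cycles n x + length ts'"
    and split_t: "num_cycles n (transp_prod [t] \<circ> ?z) = num_cycles n ?z + length [t]"
    using ts(1) t gap y by auto
  obtain e' where e': "e' \<in> star_facts n k ?z" "subseq g e'"
    using star_facts_transp_prod_comp[OF k g ts' split_ts'] by blast
  obtain e'' where "e'' \<in> star_facts n k y" "subseq e' e''"
    using star_facts_transp_prod_comp[OF k e'(1) t_set split_t] y by auto
  then have "star_le n k ?z y" unfolding star_le_def using e' by blast
  moreover have "star_le n k x ?z" unfolding star_le_def using e' g by blast
  moreover have "?z \<in> sym_group n" using z by (simp add: sym_group_def)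
  moreover have "num_cycles n ?z + 1 = num_cycles n y" using split_t y by simp
  ultimately show ?thesis using that by blast
qed

section \<open>Extremal elements and maximal chains\<close>

lemma star_le_transpose_comp:
  assumes k: "k \<in> {1..n}" and "star_le n k x y"
    and ab: "a \<in> {1..n}" "b \<in> {1..n}" "a \<noteq> b"
    and split: "num_cycles n (transpose a b \<circ> y) = num_cycles n y + 1"
  shows "star_le n k x (transpose a b \<circ> y)"
proof -
  obtain g d where g: "g \<in> star_facts n k x" and d: "d \<in> star_facts n k y" and "subseq g d"
    using assms(2) unfolding star_le_def by blast
  moreover obtain e where "e \<in> star_facts n k (transpose a b \<circ> y)" "subseq d e"
    using star_facts_insert[OF k d ab split] by blast
  ultimately show ?thesis unfolding star_le_def using subseq_order.trans by blast
qed

lemma exists_full_cycle_star_le: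
  assumes k: "k \<in> {1..n}" and "x \<in> sym_group n"
  shows "\<exists>c. is_full_cycle n c \<and> star_le n k c x"
  using assms(2)
proof (induction "num_cycles n x" arbitrary: x rule: less_induct)
  case less
  have x: "x permutes {1..n}" using less.prems by (simp add: sym_group_def)
  show ?case
  proof (cases "num_cycles n x = 1")
    case True
    then have "is_full_cycle n x" using x by (simp add: is_full_cycle_def)
    moreover obtain w where "w \<in> star_facts n k x"
      using star_facts_full_cycle_nonempty[OF calculation k] by blast
    ultimately show ?thesis unfolding star_le_def by blast
  next
    case False
    then have "2 \<le> card (cycle_of x ` {1..n})"
      using num_cycles_ge_1[of n x] k by (simp add: num_cycles_def)
    then obtain a where a: "a \<in> {1..n}" "cycle_of x a \<noteq> cycle_of x k"
      by (metis (no_types, lifting) One_nat_def card_le_Suc0_iff_eq finite_atLeastAtMost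
          finite_imageI imageE not_less_eq_eq numeral_2_eq_2)
    have px: "permutation x" using permutes_imp_permutation[OF _ x] by simp
    have "k \<notin> cycle_of x a"
      using a(2) orbit_eq_of_mem[OF px, of k a] by (auto simp: cycle_of_eq_orbit[OF px])
    then have merge: "num_cycles n (transpose a k \<circ> x) + 1 = num_cycles n x"
      using num_cycles_transpose_comp_merge[OF x a(1) k] by blast
    let ?y = "transpose a k \<circ> x"
    have "?y \<in> sym_group n"
      using x a(1) k by (simp add: sym_group_def permutes_compose permutes_swap_id)
    then obtain c where c: "is_full_cycle n c" "star_le n k c ?y"
      using less.hyps merge by (metis less_add_one)
    have "transpose a k \<circ> ?y = x" by (simp add: fun_eq_iff)
    moreover have "a \<noteq> k" using a(2) by blast
    ultimately have "star_le n k c x"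
      using star_le_transpose_comp[OF k c(2) a(1) k, of] merge by simp
    then show ?thesis using c(1) by blast
  qed
qed

lemma star_le_refl:
  assumes "k \<in> {1..n}" "x \<in> sym_group n"
  shows "star_le n k x x"
  using exists_full_cycle_star_le[OF assms] unfolding star_le_def by blast

lemma star_le_id:
  assumes k: "k \<in> {1..n}" and "x \<in> sym_group n"
  shows "star_le n k x id"
  using assms(2)
proof (induction "n - num_cycles n x" arbitrary: x rule: less_induct)
  case less
  have x: "x permutes {1..n}" using less.prems by (simp add: sym_group_def)
  show ?case
  proof (cases "x = id")
    case True
    then show ?thesis using star_le_refl[OF k less.prems] by simp
  next
    case False
    then obtain a where a: "a \<in> {1..n}" "x a \<noteq> a"
      using permutes_not_in[OF x] by (metis eq_id_iff)
    let ?b = "x a"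
    let ?y = "transpose a ?b \<circ> x"
    have b: "?b \<in> {1..n}" using permutes_in_image[OF x] a(1) by simp
    have y: "?y permutes {1..n}" using x a(1) b by (simp add: permutes_compose permutes_swap_id)
    have "?y a = a" by simp
    then have "(?y ^^ j) a = a" for j by (induction j) simp_all
    then have "?b \<notin> cycle_of ?y a" using a(2) by (auto simp: cycle_of_def)
    then have "num_cycles n (transpose a ?b \<circ> ?y) + 1 = num_cycles n ?y"
      by (rule num_cycles_transpose_comp_merge[OF y a(1) b])
    moreover have "transpose a ?b \<circ> ?y = x" by (simp add: fun_eq_iff)
    ultimately have split: "num_cycles n ?y = num_cycles n x + 1" by simp
    have "star_le n k x ?y"
      using star_le_transpose_comp[OF k star_le_refl[OF k less.prems] a(1) b a(2)[symmetric] split] .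
    moreover have "star_le n k ?y id"
    proof (rule less.hyps)
      show "n - num_cycles n ?y < n - num_cycles n x" using split num_cycles_le[of n ?y] by simp
      show "?y \<in> sym_group n" using y by (simp add: sym_group_def)
    qed
    ultimately show ?thesis by (rule star_le_trans[OF k])
  qed
qed

lemma chain_star_le_of_num_cycles_le:
  assumes k: "k \<in> {1..n}" and C: "is_chain n k C" and "x \<in> C" "y \<in> C"
    and "num_cycles n x \<le> num_cycles n y"
  shows "star_le n k x y"
proof -
  have "star_le n k x y \<or> star_le n k y x" using C assms(3,4) unfolding is_chain_def by blast
  then show ?thesis
    using star_le_num_cycles_le[OF k] star_le_num_cycles_eq_imp_eq assms(5) le_antisym by metis
qed

lemma inj_on_num_cycles_chain:
  assumes "k \<in> {1..n}" "is_chain n k C"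
  shows "inj_on (num_cycles n) C"
  using chain_star_le_of_num_cycles_le[OF assms] star_le_num_cycles_eq_imp_eq
  by (metis inj_onI order_refl)

lemma maximal_chain_absorbs:
  assumes k: "k \<in> {1..n}" and C: "is_maximal_chain n k C" and z: "z \<in> sym_group n"
    and comparable: "\<forall>c\<in>C. star_le n k c z \<or> star_le n k z c"
  shows "z \<in> C"
proof -
  have "is_chain n k (insert z C)"
    using C comparable star_le_refl[OF k z] z unfolding is_maximal_chain_def is_chain_def by blast
  then have "insert z C = C" using C unfolding is_maximal_chain_def by blast
  then show ?thesis by blast
qed

lemma maximal_chain_num_cycles_no_gap:
  assumes k: "k \<in> {1..n}" and C: "is_maximal_chain n k C" and "x \<in> C" "y \<in> C"
    and lt: "num_cycles n x < num_cycles n y"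
    and no_between: "\<forall>c\<in>C. num_cycles n c \<le> num_cycles n x \<or> num_cycles n y \<le> num_cycles n c"
  shows "num_cycles n y = num_cycles n x + 1"
proof (rule ccontr)
  assume "num_cycles n y \<noteq> num_cycles n x + 1"
  have chain: "is_chain n k C" using C by (simp add: is_maximal_chain_def)
  have xy: "star_le n k x y"
    using chain_star_le_of_num_cycles_le[OF k chain assms(3,4)] lt by simp
  obtain z where z: "z \<in> sym_group n" "star_le n k x z" "star_le n k z y"
      "num_cycles n z + 1 = num_cycles n y"
    using star_le_interpolate[OF k xy lt] by blast
  have "\<forall>c\<in>C. star_le n k c z \<or> star_le n k z c"
  proof
    fix c assume "c \<in> C"
    then consider "num_cycles n c \<le> num_cycles n x" | "num_cycles n y \<le> num_cycles n c"
      using no_between by blast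
    then show "star_le n k c z \<or> star_le n k z c"
    proof cases
      case 1
      then show ?thesis
        using chain_star_le_of_num_cycles_le[OF k chain \<open>c \<in> C\<close> assms(3)] star_le_trans[OF k _ z(2)]
        by blast
    next
      case 2
      then show ?thesis
        using chain_star_le_of_num_cycles_le[OF k chain assms(4) \<open>c \<in> C\<close>] star_le_trans[OF k z(3)]
        by blast
    qed
  qed
  then have "z \<in> C" by (rule maximal_chain_absorbs[OF k C z(1)])
  then show False
    using no_between z(4) star_le_num_cycles_le[OF k z(2)] \<open>num_cycles n y \<noteq> _\<close> by fastforce
qed

lemma id_mem_maximal_chain:
  assumes k: "k \<in> {1..n}" and C: "is_maximal_chain n k C"
  shows "id \<in> C"
proof (rule maximal_chain_absorbs[OF k C])
  show "id \<in> sym_group n" by (simp add: sym_group_def permutes_id)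
  have "C \<subseteq> sym_group n" using C by (simp add: is_maximal_chain_def is_chain_def)
  then show "\<forall>c\<in>C. star_le n k c id \<or> star_le n k id c" using star_le_id[OF k] by blast
qed

lemma maximal_chain_has_full_cycle:
  assumes k: "k \<in> {1..n}" and C: "is_maximal_chain n k C"
  shows "\<exists>c\<in>C. num_cycles n c = 1"
proof -
  have chain: "is_chain n k C" using C by (simp add: is_maximal_chain_def)
  have "C \<subseteq> sym_group n" using chain by (simp add: is_chain_def)
  moreover have "finite (sym_group n)" by (simp add: sym_group_def finite_permutations)
  ultimately have "finite C" by (rule finite_subset)
  then obtain y where y: "y \<in> C" "\<forall>c\<in>C. num_cycles n y \<le> num_cycles n c"
    using id_mem_maximal_chain[OF k C]
    by (metis (mono_tags, lifting) arg_min_if_finite(1,2) empty_iff not_le)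
  obtain c where c: "is_full_cycle n c" "star_le n k c y"
    using exists_full_cycle_star_le[OF k] y(1) \<open>C \<subseteq> sym_group n\<close> by blast
  have "c \<in> C"
  proof (rule maximal_chain_absorbs[OF k C])
    show "c \<in> sym_group n" using c(1) by (simp add: is_full_cycle_def sym_group_def)
    show "\<forall>c'\<in>C. star_le n k c' c \<or> star_le n k c c'"
      using chain_star_le_of_num_cycles_le[OF k chain y(1)] y(2) star_le_trans[OF k c(2)] by blast
  qed
  then show ?thesis using c(1) by (auto simp: is_full_cycle_def)
qed

lemma no_gaps_imp_eq_atLeastAtMost:
  fixes A :: "nat set"
  assumes "A \<subseteq> {m..n}" "m \<in> A" "n \<in> A"
    and no_gap: "\<And>a b. a \<in> A \<Longrightarrow> b \<in> A \<Longrightarrow> a < b \<Longrightarrow> \<forall>c\<in>A. c \<le> a \<or> b \<le> c \<Longrightarrow> b = a + 1"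
  shows "A = {m..n}"
proof (rule ccontr)
  assume "A \<noteq> {m..n}"
  then obtain r where r: "r \<in> {m..n}" "r \<notin> A" using assms(1) by blast
  have fin: "finite A" using assms(1) finite_subset by blast
  define a where "a = Max {c \<in> A. c \<le> r}"
  define b where "b = Min {c \<in> A. r \<le> c}"
  have "a \<in> {c \<in> A. c \<le> r}" unfolding a_def using fin assms(2) r(1) by (intro Max_in) auto
  then have a: "a \<in> A" "a \<le> r" by simp_all
  have a_max: "\<forall>c\<in>A. c \<le> r \<longrightarrow> c \<le> a" unfolding a_def using fin by (auto intro: Max_ge)
  have "b \<in> {c \<in> A. r \<le> c}" unfolding b_def using fin assms(3) r(1) by (intro Min_in) auto
  then have b: "b \<in> A" "r \<le> b" by simp_all
  have b_min: "\<forall>c\<in>A. r \<le> c \<longrightarrow> b \<le> c" unfolding b_def using fin by (auto intro: Min_le)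
  have "a < r" "r < b" using a b r(2) by (metis le_neq_implies_less)+
  moreover have "\<forall>c\<in>A. c \<le> a \<or> b \<le> c" using a_max b_min by fastforce
  ultimately have "b = a + 1" using no_gap[OF a(1) b(1)] by simp
  with \<open>a < r\<close> \<open>r < b\<close> show False by simp
qed

lemma card_maximal_chain:
  assumes k: "k \<in> {1..n}" and C: "is_maximal_chain n k C"
  shows "card C = n"
proof -
  have chain: "is_chain n k C" using C by (simp add: is_maximal_chain_def)
  have "num_cycles n ` C = {1..n}"
  proof (rule no_gaps_imp_eq_atLeastAtMost)
    show "num_cycles n ` C \<subseteq> {1..n}" using num_cycles_ge_1 num_cycles_le k by auto
    show "1 \<in> num_cycles n ` C" using maximal_chain_has_full_cycle[OF k C] by force
    show "n \<in> num_cycles n ` C" using id_mem_maximal_chain[OF k C] num_cycles_id[of n] by force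
  next
    fix p q assume "p \<in> num_cycles n ` C" "q \<in> num_cycles n ` C" "p < q"
      and "\<forall>r\<in>num_cycles n ` C. r \<le> p \<or> q \<le> r"
    then show "q = p + 1" using maximal_chain_num_cycles_no_gap[OF k C] by blast
  qed
  then show ?thesis using card_image[OF inj_on_num_cycles_chain[OF k chain]] by simp
qed

lemma is_maximal_id:
  assumes k: "k \<in> {1..n}"
  shows "is_maximal n k id"
  unfolding is_maximal_def
proof (intro conjI ballI impI)
  show "id \<in> sym_group n" by (simp add: sym_group_def permutes_id)
  fix y assume "star_le n k id y"
  moreover have "num_cycles n y \<le> num_cycles n id" using num_cycles_le num_cycles_id by simp
  ultimately show "y = id"
    using star_le_num_cycles_le[OF k] star_le_num_cycles_eq_imp_eq le_antisym by metis
qed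

lemma is_maximal_imp_id:
  assumes "k \<in> {1..n}" "is_maximal n k x"
  shows "x = id"
  using assms(2) star_le_id[OF assms(1)] is_maximal_id[OF assms(1)] unfolding is_maximal_def
  by metis

lemma is_minimal_iff_full_cycle:
  assumes k: "k \<in> {1..n}"
  shows "is_minimal n k x \<longleftrightarrow> is_full_cycle n x"
proof
  assume "is_minimal n k x"
  then show "is_full_cycle n x"
    using exists_full_cycle_star_le[OF k] unfolding is_minimal_def
    by (metis (mono_tags, lifting) is_full_cycle_def mem_Collect_eq sym_group_def)
next
  assume x: "is_full_cycle n x"
  have "num_cycles n y = num_cycles n x" if "star_le n k y x" for y
    using star_le_num_cycles_le[OF k that] num_cycles_ge_1[of n y] k x
    by (simp add: is_full_cycle_def)
  then show "is_minimal n k x"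
    using x star_le_num_cycles_eq_imp_eq
    unfolding is_minimal_def is_full_cycle_def sym_group_def by blast
qed

theorem mainTheorem12:
  fixes n k :: nat
  assumes "n \<ge> 1" and "k \<in> {1..n}"
  shows "is_maximal n k id
       \<and> (\<forall>x. is_maximal n k x \<longrightarrow> x = id)
       \<and> {x. is_minimal n k x} = {x. is_full_cycle n x}
       \<and> card {x. is_minimal n k x} = fact (n - 1)
       \<and> (\<forall>C. is_maximal_chain n k C \<longrightarrow> card C = n)"
proof -
  have minimal: "{x. is_minimal n k x} = {x. is_full_cycle n x}"
    using is_minimal_iff_full_cycle[OF assms(2)] by blast
  show ?thesis
    using is_maximal_id is_maximal_imp_id minimal card_full_cycles card_maximal_chain assms(2)
    by auto
qed

end
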